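(* Let $G$ be any digraph and let $s_n$ ($n\ge1$) be the associative spectrum of its graph algebra $\mathbb{A}(G)$. Then exactly one of the following three cases occurs: (i) $s_n=1$ for all $n$, i.e. $\mathbb{A}(G)$ satisfies $x_1(x_2x_3)\approx(x_1x_2)x_3$; (ii) $s_n=2$ for all $n\ge3$; this holds if and only if each weakly connected component of $G$ is either associative (its graph algebra satisfies $x_1(x_2x_3)\approx(x_1x_2)x_3$) or a directed bipartite graph with at least one edge, and the latter occurs for at least one component; (iii) in all other cases, $s_n\ge|R_{n-1}|$ for all $n\ge3$, where $|R_{n-1}|=\Theta(\alpha^n)$ and $\alpha\approx1.755$ is the unique positive root of $x^4-x^3-x^2-1$.
   Context: Digraphs $G=(V,E)$ have $E\subseteq V\times V$, loops allowed, possibly infinite. The graph algebra $\mathbb{A}(G)$ is the groupoid on $V\cup\{\infty\}$ ($\infty\notin V$) with $xy=x$ if $x,y\in V$ and $(x,y)\in E$, and $xy=\infty$ otherwise. $B_n$ is the set of bracketings of size $n$: binary terms in which $x_1,\dots,x_n$ each occur exactly once, in this order. The associative spectrum $s_n$ of a groupoid is the number of distinct $n$-ary term operations induced by the bracketings in $B_n$ (always $s_1=s_2=1$). The weakly connected components of $G$ are its induced subgraphs on the vertex sets of connected components of the underlying undirected graph. A directed bipartite graph is a digraph whose vertex set is partitioned as $V_1\cup V_2$ with $E\subseteq V_1\times V_2$. For $n\ge2$, $R_n$ is the set of words of length $n$ over $\{0,1\}$ that do not start with $01$, do not end with $10$, and do not contain $101$ as a factor. $\Theta(\alpha^n)$ means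 bounded between $c_1\alpha^n$ and $c_2\alpha^n$ for some positive constants $c_1,c_2$. *)

theory Defs
  imports Complex_Main "HOL-Library.FuncSet" "HOL-Library.Landau_Symbols"
begin

text \<open>The graph algebra has carrier
  V together with a fresh element infinity; we model it on the type 'v option, with
  None playing the role of infinity and Some v the vertex v.\<close>

definition ga_carrier :: "'v set \<Rightarrow> 'v option set" where
  "ga_carrier V = insert None (Some ` V)"

fun ga_op :: "('v \<times> 'v) set \<Rightarrow> 'v option \<Rightarrow> 'v option \<Rightarrow> 'v option" where
  "ga_op E (Some x) (Some y) = (if (x, y) \<in> E then Some x else None)"
| "ga_op E _ _ = None"

datatype btree = Leaf | Node btree btree

fun leaves :: "btree \<Rightarrow> nat" where
  "leaves Leaf = 1"
| "leaves (Node l r) = leaves l + leaves r"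

text \<open>Bracketings of size n: binary terms with n leaves, the variables x_1..x_n
  being placed at the leaves in left-to-right order.\<close>
definition bracketings :: "nat \<Rightarrow> btree set" where
  "bracketings n = {t. leaves t = n}"

fun beval :: "('a \<Rightarrow> 'a \<Rightarrow> 'a) \<Rightarrow> btree \<Rightarrow> 'a list \<Rightarrow> 'a" where
  "beval f Leaf xs = hd xs"
| "beval f (Node l r) xs =
     f (beval f l (take (leaves l) xs)) (beval f r (drop (leaves l) xs))"

definition term_op :: "'a set \<Rightarrow> ('a \<Rightarrow> 'a \<Rightarrow> 'a) \<Rightarrow> nat \<Rightarrow> btree \<Rightarrow> ('a list \<Rightarrow> 'a)" where
  "term_op A f n t = restrict (beval f t) {xs. length xs = n \<and> set xs \<subseteq> A}"

definition assoc_spectrum :: "'a set \<Rightarrow> ('a \<Rightarrow> 'a \<Rightarrow> 'a) \<Rightarrow> nat \<Rightarrow> nat" where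
  "assoc_spectrum A f n = card (term_op A f n ` bracketings n)"

definition associative_on :: "'a set \<Rightarrow> ('a \<Rightarrow> 'a \<Rightarrow> 'a) \<Rightarrow> bool" where
  "associative_on A f \<longleftrightarrow> (\<forall>x\<in>A. \<forall>y\<in>A. \<forall>z\<in>A. f x (f y z) = f (f x y) z)"

definition weak_component :: "'v set \<Rightarrow> ('v \<times> 'v) set \<Rightarrow> 'v \<Rightarrow> 'v set" where
  "weak_component V E v = {u \<in> V. (v, u) \<in> (E \<union> E\<inverse>)\<^sup>*}"

definition weak_components :: "'v set \<Rightarrow> ('v \<times> 'v) set \<Rightarrow> 'v set set" where
  "weak_components V E = weak_component V E ` V"

definition induced_edges :: "('v \<times> 'v) set \<Rightarrow> 'v set \<Rightarrow> ('v \<times> 'v) set" where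
  "induced_edges E C = E \<inter> (C \<times> C)"

definition directed_bipartite :: "'v set \<Rightarrow> ('v \<times> 'v) set \<Rightarrow> bool" where
  "directed_bipartite V E \<longleftrightarrow>
     (\<exists>V1 V2. V1 \<union> V2 = V \<and> V1 \<inter> V2 = {} \<and> E \<subseteq> V1 \<times> V2)"

text \<open>Words over {0,1} are bool lists (False = 0, True = 1).\<close>
definition R_words :: "nat \<Rightarrow> bool list set" where
  "R_words n = {w. length w = n
      \<and> \<not> (\<exists>u. w = [False, True] @ u)
      \<and> \<not> (\<exists>u. w = u @ [True, False])
      \<and> \<not> (\<exists>u v. w = u @ [True, False, True] @ v)}"

end

theory Submission
  imports Defs
begin

(* Evaluated at vertices x_1 ... x_n, a bracketing yields either x_1 or infinity, and it yields
  x_1 exactly when every inner node joins the leftmost variables of its two subterms by an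
  edge; any argument infinity gives infinity. Two bracketings therefore induce the same term
  operation iff they impose the same edge constraints on all vertex tuples.

  Associativity of A(G) says that x -> y implies (y -> z iff x -> z). Then every bracketing
  imposes the same constraints as the left comb, namely x_1 -> x_i for all i > 1. Every other
  bracketing needs a path x_1 -> a -> b, impossible in a bipartite component; so if all
  components are associative or bipartite with an edge, a bracketing is either the left comb
  or equivalent to (x_1 -> x_i for all i, and the component of x_1 is associative), and a
  bipartite component separates these two.

  Otherwise G contains a non-transitive path x -> u -> v, a fork x -> w, x -> z with
  w -> t but not w -> z, or a loop at x with an edge into a sink. An R-word of length n - 1 is
  a sequence of blocks 1 and 0^(k+1), k > 0, each 0-block followed by a 1 or the end. Realise
  the blocks as left combs (first two configurations) or right combs (the third), attach them
  one after another to a new first variable, and the configuration separates the resulting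
  bracketings. The words R_m are counted by a three-state automaton, giving the recurrence
  a(m + 4) = a(m + 3) + a(m + 2) + a(m) with characteristic root alpha. *)

section \<open>Term operations of graph algebras\<close>

lemma leaves_pos [simp]: "0 < leaves t"
  by (induction t) auto

lemma leaves_neq_0 [simp]: "leaves t \<noteq> 0"
  using leaves_pos[of t] by linarith

lemma finite_bracketings: "finite (bracketings n)"
  unfolding bracketings_def
proof (induction n rule: less_induct)
  case (less n)
  let ?splits = "\<Union>k\<in>{1..<n}. case_prod Node ` ({l. leaves l = k} \<times> {r. leaves r = n - k})"
  have "{t. leaves t = n} \<subseteq> insert Leaf ?splits"
  proof
    fix t assume t: "t \<in> {t. leaves t = n}"
    show "t \<in> insert Leaf ?splits"
    proof (cases t)
      case (Node l r)
      then show ?thesis using t by (auto intro!: bexI[of _ "leaves l"] simp: Suc_le_eq)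
    qed simp
  qed
  moreover have "finite ?splits"
    by (auto intro!: finite_cartesian_product less.IH)
  ultimately show ?case
    using finite_subset by blast
qed

fun ga_defined :: "('v \<times> 'v) set \<Rightarrow> btree \<Rightarrow> 'v list \<Rightarrow> bool" where
  "ga_defined E Leaf xs \<longleftrightarrow> True"
| "ga_defined E (Node l r) xs \<longleftrightarrow>
     ga_defined E l (take (leaves l) xs) \<and> ga_defined E r (drop (leaves l) xs)
     \<and> (hd xs, hd (drop (leaves l) xs)) \<in> E"

lemma ga_op_None_right [simp]: "ga_op E a None = None"
  by (cases a) auto

lemma beval_ga_vertices:
  "length xs = leaves t \<Longrightarrow>
   beval (ga_op E) t (map Some xs) = (if ga_defined E t xs then Some (hd xs) else None)"
proof (induction t arbitrary: xs)
  case Leaf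
  then show ?case by (cases xs) auto
next
  case (Node l r)
  then show ?case by (simp add: take_map drop_map)
qed

lemma beval_ga_infinity:
  "length ys = leaves t \<Longrightarrow> None \<in> set ys \<Longrightarrow> beval (ga_op E) t ys = None"
proof (induction t arbitrary: ys)
  case Leaf
  then show ?case by (cases ys) auto
next
  case (Node l r)
  have "None \<in> set (take (leaves l) ys) \<or> None \<in> set (drop (leaves l) ys)"
    using Node.prems(2) by (metis append_take_drop_id Un_iff set_append)
  then show ?case
  proof
    assume "None \<in> set (take (leaves l) ys)"
    then show ?thesis using Node by simp
  next
    assume "None \<in> set (drop (leaves l) ys)"
    then have "beval (ga_op E) r (drop (leaves l) ys) = None" using Node by simp
    then show ?thesis by (cases "beval (ga_op E) l (take (leaves l) ys)") auto
  qed
qed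

lemma term_op_ga_eq_iff:
  assumes "leaves t = n" "leaves t' = n"
  shows "term_op (ga_carrier V) (ga_op E) n t = term_op (ga_carrier V) (ga_op E) n t'
     \<longleftrightarrow> (\<forall>xs. length xs = n \<longrightarrow> set xs \<subseteq> V \<longrightarrow> ga_defined E t xs = ga_defined E t' xs)"
    (is "?ops \<longleftrightarrow> ?defs")
proof
  assume eq: ?ops
  show ?defs
  proof (intro allI impI)
    fix xs :: "'a list" assume xs: "length xs = n" "set xs \<subseteq> V"
    then have "map Some xs \<in> {ys. length ys = n \<and> set ys \<subseteq> ga_carrier V}"
      by (auto simp: ga_carrier_def)
    then have "beval (ga_op E) t (map Some xs) = beval (ga_op E) t' (map Some xs)"
      using fun_cong[OF eq, of "map Some xs"] by (simp add: term_op_def)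
    then show "ga_defined E t xs = ga_defined E t' xs"
      using beval_ga_vertices[of xs t E] beval_ga_vertices[of xs t' E] xs assms
      by (auto split: if_splits)
  qed
next
  assume defs: ?defs
  show ?ops
    unfolding term_op_def
  proof (rule restrict_ext)
    fix ys assume ys: "ys \<in> {ys. length ys = n \<and> set ys \<subseteq> ga_carrier V}"
    show "beval (ga_op E) t ys = beval (ga_op E) t' ys"
    proof (cases "None \<in> set ys")
      case True
      then show ?thesis using ys assms by (simp add: beval_ga_infinity)
    next
      case False
      define xs where "xs = map the ys"
      have ys_Some: "ys = map Some xs"
        unfolding xs_def using False by (induction ys) auto
      have "length xs = n" "set xs \<subseteq> V"
        using ys unfolding ys_Some by (auto simp: ga_carrier_def)
      then show ?thesis
        using defs beval_ga_vertices[of xs t E] beval_ga_vertices[of xs t' E] assms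
        unfolding ys_Some by simp
    qed
  qed
qed

lemma associative_on_ga_iff:
  "associative_on (ga_carrier V) (ga_op E) \<longleftrightarrow>
   (\<forall>x\<in>V. \<forall>y\<in>V. \<forall>z\<in>V. (x, y) \<in> E \<longrightarrow> ((y, z) \<in> E \<longleftrightarrow> (x, z) \<in> E))"
proof
  assume assoc: "associative_on (ga_carrier V) (ga_op E)"
  show "\<forall>x\<in>V. \<forall>y\<in>V. \<forall>z\<in>V. (x, y) \<in> E \<longrightarrow> ((y, z) \<in> E \<longleftrightarrow> (x, z) \<in> E)"
  proof (intro ballI impI)
    fix x y z assume "x \<in> V" "y \<in> V" "z \<in> V" "(x, y) \<in> E"
    moreover from calculation have
      "ga_op E (Some x) (ga_op E (Some y) (Some z)) = ga_op E (ga_op E (Some x) (Some y)) (Some z)"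
      using assoc unfolding associative_on_def ga_carrier_def by blast
    ultimately show "(y, z) \<in> E \<longleftrightarrow> (x, z) \<in> E" by (auto split: if_splits)
  qed
next
  assume edges: "\<forall>x\<in>V. \<forall>y\<in>V. \<forall>z\<in>V. (x, y) \<in> E \<longrightarrow> ((y, z) \<in> E \<longleftrightarrow> (x, z) \<in> E)"
  show "associative_on (ga_carrier V) (ga_op E)"
    unfolding associative_on_def
  proof (intro ballI)
    fix a b c assume "a \<in> ga_carrier V" "b \<in> ga_carrier V" "c \<in> ga_carrier V"
    then consider "a = None \<or> b = None \<or> c = None"
      | x y z where "a = Some x" "b = Some y" "c = Some z" "x \<in> V" "y \<in> V" "z \<in> V"
      by (auto simp: ga_carrier_def)
    then show "ga_op E a (ga_op E b c) = ga_op E (ga_op E a b) c"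
    proof cases
      case 1
      then show ?thesis by (cases a; cases b) auto
    next
      case 2
      then have "(x, y) \<in> E \<Longrightarrow> (y, z) \<in> E \<longleftrightarrow> (x, z) \<in> E" using edges by blast
      with 2 show ?thesis by simp
    qed
  qed
qed

fun left_comb :: "nat \<Rightarrow> btree" where
  "left_comb 0 = Leaf"
| "left_comb (Suc k) = Node (left_comb k) Leaf"

lemma leaves_left_comb [simp]: "leaves (left_comb k) = Suc k"
  by (induction k) auto

lemma left_comb_in_bracketings: "1 \<le> n \<Longrightarrow> left_comb (n - 1) \<in> bracketings n"
  by (simp add: bracketings_def)

definition hd_dominates :: "('v \<times> 'v) set \<Rightarrow> 'v list \<Rightarrow> bool" where
  "hd_dominates E xs \<longleftrightarrow> (\<forall>y\<in>set (tl xs). (hd xs, y) \<in> E)"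

lemma hd_dominates_split:
  assumes "0 < k" "k \<le> length xs"
  shows "hd_dominates E xs \<longleftrightarrow> hd_dominates E (take k xs) \<and> (\<forall>y\<in>set (drop k xs). (hd xs, y) \<in> E)"
proof (cases xs)
  case (Cons a as)
  have "set as = set (take (k - 1) as) \<union> set (drop (k - 1) as)"
    by (metis append_take_drop_id set_append)
  then show ?thesis using Cons assms by (cases k) (auto simp: hd_dominates_def)
qed (use assms in simp)

lemma ga_defined_left_comb:
  "length xs = Suc k \<Longrightarrow> ga_defined E (left_comb k) xs \<longleftrightarrow> hd_dominates E xs"
proof (induction k arbitrary: xs)
  case 0
  then show ?case by (cases xs) (auto simp: hd_dominates_def)
next
  case (Suc k)
  have split: "hd_dominates E xs \<longleftrightarrow>
      hd_dominates E (take (Suc k) xs) \<and> (\<forall>y\<in>set (drop (Suc k) xs). (hd xs, y) \<in> E)"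
    using Suc.prems by (intro hd_dominates_split) auto
  obtain z where "drop (Suc k) xs = [z]"
    using Suc.prems by (cases xs rule: rev_cases) auto
  then show ?case
    using split Suc.IH[of "take (Suc k) xs"] Suc.prems by simp
qed

lemma ga_defined_iff_hd_dominates:
  assumes closed: "\<And>x y z. x \<in> D \<Longrightarrow> (x, y) \<in> E \<Longrightarrow> y \<in> D \<and> ((y, z) \<in> E \<longleftrightarrow> (x, z) \<in> E)"
  shows "hd xs \<in> D \<Longrightarrow> length xs = leaves t \<Longrightarrow> ga_defined E t xs \<longleftrightarrow> hd_dominates E xs"
proof (induction t arbitrary: xs)
  case Leaf
  then show ?case by (cases xs) (auto simp: hd_dominates_def)
next
  case (Node l r)
  define xs1 where "xs1 = take (leaves l) xs"
  define xs2 where "xs2 = drop (leaves l) xs"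
  have l: "ga_defined E l xs1 \<longleftrightarrow> hd_dominates E xs1"
    using Node by (simp add: xs1_def)
  have split: "hd_dominates E xs \<longleftrightarrow> hd_dominates E xs1 \<and> (\<forall>y\<in>set xs2. (hd xs, y) \<in> E)"
    using hd_dominates_split[of "leaves l" xs E] Node.prems by (simp add: xs1_def xs2_def)
  have "length xs2 = leaves r"
    using Node.prems by (simp add: xs2_def)
  then obtain y ys where xs2: "xs2 = y # ys"
    by (cases xs2) auto
  show ?case
  proof (cases "(hd xs, y) \<in> E")
    case True
    then have "y \<in> D" and same_nbrs: "\<And>z. (y, z) \<in> E \<longleftrightarrow> (hd xs, z) \<in> E"
      using closed Node.prems(1) by blast+
    then have "ga_defined E r xs2 \<longleftrightarrow> (\<forall>z\<in>set ys. (hd xs, z) \<in> E)"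
      using Node.IH(2)[of xs2] \<open>length xs2 = leaves r\<close> xs2 by (simp add: hd_dominates_def)
    then show ?thesis
      using l split xs2 True by (simp add: xs1_def[symmetric] xs2_def[symmetric])
  next
    case False
    then show ?thesis
      using split xs2 by (simp add: xs2_def[symmetric])
  qed
qed

lemma ga_defined_two_path:
  "t \<noteq> left_comb (leaves t - 1) \<Longrightarrow> length xs = leaves t \<Longrightarrow> ga_defined E t xs \<Longrightarrow>
   \<exists>a b. (hd xs, a) \<in> E \<and> (a, b) \<in> E"
proof (induction t arbitrary: xs)
  case (Node l r)
  show ?case
  proof (cases r)
    case Leaf
    have "left_comb (leaves l) = Node (left_comb (leaves l - 1)) Leaf"
      by (cases "leaves l") auto
    then have "l \<noteq> left_comb (leaves l - 1)"
      using Node.prems(1) Leaf by auto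
    then show ?thesis using Node.IH(1)[of "take (leaves l) xs"] Node.prems by auto
  next
    case (Node r1 r2)
    then show ?thesis using Node.prems by auto
  qed
qed simp

lemma directed_bipartite_induced_iff:
  "directed_bipartite C (induced_edges E C) \<longleftrightarrow>
   \<not> (\<exists>a\<in>C. \<exists>b\<in>C. \<exists>c\<in>C. (a, b) \<in> E \<and> (b, c) \<in> E)"
proof
  assume "directed_bipartite C (induced_edges E C)"
  then show "\<not> (\<exists>a\<in>C. \<exists>b\<in>C. \<exists>c\<in>C. (a, b) \<in> E \<and> (b, c) \<in> E)"
    unfolding directed_bipartite_def induced_edges_def by blast
next
  assume no_path: "\<not> (\<exists>a\<in>C. \<exists>b\<in>C. \<exists>c\<in>C. (a, b) \<in> E \<and> (b, c) \<in> E)"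
  let ?V1 = "{a\<in>C. \<exists>b\<in>C. (a, b) \<in> E}"
  have "?V1 \<union> (C - ?V1) = C \<and> ?V1 \<inter> (C - ?V1) = {} \<and> induced_edges E C \<subseteq> ?V1 \<times> (C - ?V1)"
    using no_path unfolding induced_edges_def by blast
  then show "directed_bipartite C (induced_edges E C)"
    unfolding directed_bipartite_def by blast
qed

lemma rtrancl_Un_converse_sym: "(x, y) \<in> (E \<union> E\<inverse>)\<^sup>* \<Longrightarrow> (y, x) \<in> (E \<union> E\<inverse>)\<^sup>*"
  using sym_rtrancl[OF sym_Un_converse] by (rule symD)

section \<open>The associative and the bipartite case\<close>

locale digraph =
  fixes V :: "'v set" and E :: "('v \<times> 'v) set"
  assumes edges_subset: "E \<subseteq> V \<times> V"
begin

abbreviation spectrum :: "nat \<Rightarrow> nat" where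
  "spectrum \<equiv> assoc_spectrum (ga_carrier V) (ga_op E)"

abbreviation term_fun :: "nat \<Rightarrow> btree \<Rightarrow> 'v option list \<Rightarrow> 'v option" where
  "term_fun \<equiv> term_op (ga_carrier V) (ga_op E)"

lemma finite_term_funs: "finite (term_fun n ` bracketings n)"
  using finite_bracketings by blast

lemma spectrum_ge_2:
  assumes "t \<in> bracketings n" "t' \<in> bracketings n" "term_fun n t \<noteq> term_fun n t'"
  shows "2 \<le> spectrum n"
proof -
  have "{term_fun n t, term_fun n t'} \<subseteq> term_fun n ` bracketings n"
    using assms by auto
  from card_mono[OF finite_term_funs this] show ?thesis
    using assms(3) by (simp add: assoc_spectrum_def)
qed

lemma spectrum_eq_1:
  assumes assoc: "associative_on (ga_carrier V) (ga_op E)" and "1 \<le> n"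
  shows "spectrum n = 1"
proof -
  have closed: "y \<in> V \<and> ((y, z) \<in> E \<longleftrightarrow> (x, z) \<in> E)" if "x \<in> V" "(x, y) \<in> E" for x y z
    using that assoc edges_subset unfolding associative_on_ga_iff by blast
  have "term_fun n t = term_fun n (left_comb (n - 1))" if "t \<in> bracketings n" for t
  proof -
    have leaves: "leaves t = n" "leaves (left_comb (n - 1)) = n"
      using that \<open>1 \<le> n\<close> by (auto simp: bracketings_def)
    show ?thesis
      unfolding term_op_ga_eq_iff[OF leaves]
    proof (intro allI impI)
      fix xs assume xs: "length xs = n" "set xs \<subseteq> V"
      then have "hd xs \<in> V"
        using \<open>1 \<le> n\<close> by (cases xs) auto
      then show "ga_defined E t xs = ga_defined E (left_comb (n - 1)) xs"
        using ga_defined_iff_hd_dominates[OF closed] xs leaves by metis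
    qed
  qed
  then have "term_fun n ` bracketings n = {term_fun n (left_comb (n - 1))}"
    using left_comb_in_bracketings[OF \<open>1 \<le> n\<close>] by blast
  then show ?thesis
    by (simp add: assoc_spectrum_def)
qed

lemma spectrum_3_ge_2:
  assumes "\<not> associative_on (ga_carrier V) (ga_op E)"
  shows "2 \<le> spectrum 3"
proof -
  obtain x y z where xyz: "x \<in> V" "y \<in> V" "z \<in> V" "(x, y) \<in> E" "((y, z) \<in> E) \<noteq> ((x, z) \<in> E)"
    using assms unfolding associative_on_ga_iff by blast
  let ?t = "left_comb 2" and ?t' = "Node Leaf (left_comb 1)"
  have leaves: "leaves ?t = 3" "leaves ?t' = 3"
    by (simp_all add: numeral_eq_Suc)
  have "ga_defined E ?t [x, y, z] \<noteq> ga_defined E ?t' [x, y, z]"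
    using xyz by (simp add: numeral_eq_Suc)
  moreover have "length [x, y, z] = 3" "set [x, y, z] \<subseteq> V"
    using xyz by auto
  ultimately have "term_fun 3 ?t \<noteq> term_fun 3 ?t'"
    unfolding term_op_ga_eq_iff[OF leaves] by blast
  with leaves show ?thesis
    by (intro spectrum_ge_2) (auto simp: bracketings_def)
qed

abbreviation component :: "'v \<Rightarrow> 'v set" where
  "component \<equiv> weak_component V E"

lemma weak_components_eq: "weak_components V E = component ` V"
  by (simp add: weak_components_def)

lemma component_refl: "x \<in> V \<Longrightarrow> x \<in> component x"
  by (simp add: weak_component_def)

lemma component_out_edge: "x \<in> component v \<Longrightarrow> (x, y) \<in> E \<Longrightarrow> y \<in> component v"
  using edges_subset unfolding weak_component_def by (auto intro: rtrancl_into_rtrancl)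

lemma component_eq:
  assumes "y \<in> component x"
  shows "component y = component x"
proof -
  from assms have xy: "(x, y) \<in> (E \<union> E\<inverse>)\<^sup>*"
    by (simp add: weak_component_def)
  then have yx: "(y, x) \<in> (E \<union> E\<inverse>)\<^sup>*"
    by (rule rtrancl_Un_converse_sym)
  show ?thesis
    unfolding weak_component_def using rtrancl_trans[OF xy] rtrancl_trans[OF yx] by blast
qed

lemma component_connected:
  assumes "a \<in> component v" "b \<in> component v"
  shows "(a, b) \<in> (E \<union> E\<inverse>)\<^sup>*"
proof -
  from assms have "(v, a) \<in> (E \<union> E\<inverse>)\<^sup>*" "(v, b) \<in> (E \<union> E\<inverse>)\<^sup>*"
    by (simp_all add: weak_component_def)
  then show ?thesis
    using rtrancl_Un_converse_sym rtrancl_trans by metis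
qed

definition induced_assoc :: "'v set \<Rightarrow> bool" where
  "induced_assoc C \<longleftrightarrow> associative_on (ga_carrier C) (ga_op (induced_edges E C))"

definition induced_bipartite :: "'v set \<Rightarrow> bool" where
  "induced_bipartite C \<longleftrightarrow> directed_bipartite C (induced_edges E C) \<and> induced_edges E C \<noteq> {}"

lemma induced_assoc_closed:
  assumes "induced_assoc (component v)" "x \<in> component v" "(x, y) \<in> E"
  shows "y \<in> component v \<and> ((y, z) \<in> E \<longleftrightarrow> (x, z) \<in> E)"
proof -
  have y: "y \<in> component v"
    using component_out_edge assms(2,3) .
  show ?thesis
  proof (cases "z \<in> component v")
    case True
    then show ?thesis
      using assms y unfolding induced_assoc_def associative_on_ga_iff induced_edges_def by blast
  next
    case False
    then show ?thesis
      using y assms(2) component_out_edge by blast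
  qed
qed

lemma induced_bipartite_not_assoc: "induced_bipartite C \<Longrightarrow> \<not> induced_assoc C"
proof
  assume bip: "induced_bipartite C" and assoc: "induced_assoc C"
  then obtain x y where xy: "(x, y) \<in> induced_edges E C"
    unfolding induced_bipartite_def by auto
  then have "(y, y) \<in> induced_edges E C"
    using assoc unfolding induced_assoc_def associative_on_ga_iff induced_edges_def by blast
  with xy bip show False
    using directed_bipartite_induced_iff[of C E] unfolding induced_bipartite_def induced_edges_def
    by blast
qed

lemma associative_if_components_assoc:
  assumes "\<forall>v\<in>V. induced_assoc (component v)"
  shows "associative_on (ga_carrier V) (ga_op E)"
  unfolding associative_on_ga_iff
proof (intro ballI impI)
  fix x y z assume "x \<in> V" "y \<in> V" "z \<in> V" "(x, y) \<in> E"
  then show "(y, z) \<in> E \<longleftrightarrow> (x, z) \<in> E"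
    using assms induced_assoc_closed component_refl by blast
qed


definition bipartite_case :: bool where
  "bipartite_case \<longleftrightarrow> (\<forall>C\<in>weak_components V E. induced_assoc C \<or> induced_bipartite C)
     \<and> (\<exists>C\<in>weak_components V E. induced_bipartite C)"

lemma ga_defined_bipartite_case:
  assumes bipartite_case and not_comb: "t \<noteq> left_comb (leaves t - 1)"
    and xs: "length xs = leaves t" "set xs \<subseteq> V"
  shows "ga_defined E t xs \<longleftrightarrow> hd_dominates E xs \<and> induced_assoc (component (hd xs))"
proof -
  have "hd xs \<in> V"
    using xs by (cases xs) auto
  then have hd: "hd xs \<in> component (hd xs)"
    by (rule component_refl)
  have "induced_assoc (component (hd xs)) \<or> induced_bipartite (component (hd xs))"
    using \<open>bipartite_case\<close> \<open>hd xs \<in> V\<close> unfolding bipartite_case_def weak_components_eq by blast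
  show ?thesis
  proof
    assume defined: "ga_defined E t xs"
    then obtain a b where ab: "(hd xs, a) \<in> E" "(a, b) \<in> E"
      using ga_defined_two_path not_comb xs(1) by blast
    then have "a \<in> component (hd xs)" "b \<in> component (hd xs)"
      using hd component_out_edge by blast+
    with hd ab have "\<not> induced_bipartite (component (hd xs))"
      unfolding induced_bipartite_def directed_bipartite_induced_iff by blast
    with \<open>induced_assoc _ \<or> _\<close> have assoc: "induced_assoc (component (hd xs))"
      by blast
    then show "hd_dominates E xs \<and> induced_assoc (component (hd xs))"
      using defined ga_defined_iff_hd_dominates[OF induced_assoc_closed[OF assoc] hd xs(1)] by simp
  next
    assume "hd_dominates E xs \<and> induced_assoc (component (hd xs))"
    then show "ga_defined E t xs"
      using ga_defined_iff_hd_dominates[OF induced_assoc_closed, of "hd xs"] hd xs(1) by blast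
  qed
qed

lemma term_funs_bipartite_case:
  assumes bipartite_case "3 \<le> n"
  shows "term_fun n ` bracketings n =
    {term_fun n (left_comb (n - 1)), term_fun n (Node Leaf (left_comb (n - 2)))}"
proof -
  let ?l = "left_comb (n - 1)" and ?t = "Node Leaf (left_comb (n - 2))"
  have leaves: "leaves ?l = n" "leaves ?t = n"
    using \<open>3 \<le> n\<close> by auto
  have t_not_comb: "?t \<noteq> left_comb (leaves ?t - 1)"
    using \<open>3 \<le> n\<close> by (cases "n - 2") auto
  have "term_fun n t \<in> {term_fun n ?l, term_fun n ?t}" if "t \<in> bracketings n" for t
  proof (cases "t = ?l")
    case False
    have "leaves t = n"
      using that by (simp add: bracketings_def)
    have "term_fun n t = term_fun n ?t"
      unfolding term_op_ga_eq_iff[OF \<open>leaves t = n\<close> leaves(2)]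
    proof (intro allI impI)
      fix xs assume xs: "length xs = n" "set xs \<subseteq> V"
      have "ga_defined E t xs \<longleftrightarrow> hd_dominates E xs \<and> induced_assoc (component (hd xs))"
        using ga_defined_bipartite_case[OF assms(1), of t xs] False \<open>leaves t = n\<close> xs by simp
      moreover have "ga_defined E ?t xs \<longleftrightarrow> hd_dominates E xs \<and> induced_assoc (component (hd xs))"
        using ga_defined_bipartite_case[OF assms(1) t_not_comb] leaves xs by simp
      ultimately show "ga_defined E t xs = ga_defined E ?t xs"
        by simp
    qed
    then show ?thesis by simp
  qed simp
  moreover have "?l \<in> bracketings n" "?t \<in> bracketings n"
    using leaves by (simp_all add: bracketings_def)
  ultimately show ?thesis
    by blast
qed

lemma term_fun_left_comb_neq_bipartite_case:
  assumes bipartite_case "3 \<le> n"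
  shows "term_fun n (left_comb (n - 1)) \<noteq> term_fun n (Node Leaf (left_comb (n - 2)))"
proof -
  let ?l = "left_comb (n - 1)" and ?t = "Node Leaf (left_comb (n - 2))"
  have leaves: "leaves ?l = n" "leaves ?t = n"
    using \<open>3 \<le> n\<close> by auto
  have t_not_comb: "?t \<noteq> left_comb (leaves ?t - 1)"
    using \<open>3 \<le> n\<close> by (cases "n - 2") auto
  obtain v where v: "v \<in> V" "induced_bipartite (component v)"
    using assms(1) unfolding bipartite_case_def weak_components_eq by blast
  then obtain a b where ab: "(a, b) \<in> E" "a \<in> component v"
    unfolding induced_bipartite_def induced_edges_def by auto
  then have "a \<in> V" "b \<in> V"
    using edges_subset by auto
  have "\<not> induced_assoc (component a)"
    using induced_bipartite_not_assoc v(2) component_eq[OF ab(2)] by simp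
  let ?xs = "a # replicate (n - 1) b"
  have xs: "length ?xs = n" "set ?xs \<subseteq> V"
    using \<open>3 \<le> n\<close> \<open>a \<in> V\<close> \<open>b \<in> V\<close> by auto
  have "ga_defined E ?l ?xs"
    using ga_defined_left_comb[of ?xs "n - 1" E] xs ab(1) by (simp add: hd_dominates_def)
  moreover have "length ?xs = leaves ?t"
    using xs leaves by simp
  then have "\<not> ga_defined E ?t ?xs"
    using ga_defined_bipartite_case[OF assms(1) t_not_comb _ xs(2)] \<open>\<not> induced_assoc (component a)\<close>
    by simp
  ultimately show ?thesis
    unfolding term_op_ga_eq_iff[OF leaves] using xs by blast
qed

lemma spectrum_eq_2:
  assumes bipartite_case "3 \<le> n"
  shows "spectrum n = 2"
  unfolding assoc_spectrum_def term_funs_bipartite_case[OF assms]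
  using term_fun_left_comb_neq_bipartite_case[OF assms] by simp

lemma not_associative_if_bipartite_case:
  assumes bipartite_case
  shows "\<not> associative_on (ga_carrier V) (ga_op E)"
proof
  assume "associative_on (ga_carrier V) (ga_op E)"
  then have "spectrum 3 = 1"
    by (rule spectrum_eq_1) simp
  with spectrum_eq_2[OF assms, of 3] show False
    by simp
qed

definition nontransitive_path :: bool where
  "nontransitive_path \<longleftrightarrow> (\<exists>x u v. (x, u) \<in> E \<and> (u, v) \<in> E \<and> (x, v) \<notin> E)"

definition open_fork :: bool where
  "open_fork \<longleftrightarrow> (\<exists>x w z t. (x, w) \<in> E \<and> (x, z) \<in> E \<and> (w, z) \<notin> E \<and> (w, t) \<in> E)"

definition loop_to_sink :: bool where
  "loop_to_sink \<longleftrightarrow> (\<exists>x u. (x, x) \<in> E \<and> (x, u) \<in> E \<and> (\<forall>t. (u, t) \<notin> E))"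

definition far_from_sinks :: "'v \<Rightarrow> bool" where
  "far_from_sinks w \<longleftrightarrow> (\<exists>t. (w, t) \<in> E) \<and> (\<forall>t. (w, t) \<in> E \<longrightarrow> (\<exists>s. (t, s) \<in> E))"

lemma far_from_sinks_connected:
  assumes "\<not> nontransitive_path" "\<not> open_fork"
    and "(w, w') \<in> (E \<union> E\<inverse>)\<^sup>*" "far_from_sinks w"
  shows "far_from_sinks w'"
  using assms(3)
proof (induction rule: rtrancl_induct)
  case base
  show ?case by (fact assms(4))
next
  case (step w' w'')
  show ?case
  proof (cases "(w', w'') \<in> E")
    case True
    then show ?thesis
      using step.IH assms(1,2) unfolding far_from_sinks_def nontransitive_path_def by blast
  next
    case False
    then have rev_edge: "(w'', w') \<in> E"
      using step.hyps(2) by blast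
    obtain t0 where "(w', t0) \<in> E"
      using step.IH unfolding far_from_sinks_def by blast
    then have "(w'', t) \<in> E \<Longrightarrow> (w', t) \<in> E" for t
      using rev_edge assms(2) unfolding open_fork_def by blast
    then show ?thesis
      using rev_edge step.IH unfolding far_from_sinks_def by blast
  qed
qed

lemma configuration_if_not_induced_assoc_or_bipartite:
  assumes "v \<in> V" "\<not> induced_assoc (component v)" "\<not> induced_bipartite (component v)"
  shows "nontransitive_path \<or> open_fork \<or> loop_to_sink"
proof (rule ccontr)
  assume "\<not> ?thesis"
  then have path: "\<not> nontransitive_path" and fork: "\<not> open_fork" and loop: "\<not> loop_to_sink"
    by auto
  obtain x y z where xyz: "x \<in> component v" "y \<in> component v" "z \<in> component v"
      "(x, y) \<in> E" "((y, z) \<in> E) \<noteq> ((x, z) \<in> E)"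
    using assms(2) unfolding induced_assoc_def associative_on_ga_iff induced_edges_def by blast
  have y_sink: "(y, t) \<notin> E" for t
    using xyz(4,5) path fork unfolding nontransitive_path_def open_fork_def by blast
  have "induced_edges E (component v) \<noteq> {}"
    using xyz unfolding induced_edges_def by blast
  then obtain a b c where abc: "a \<in> component v" "b \<in> component v" "(a, b) \<in> E" "(b, c) \<in> E"
    using assms(3) unfolding induced_bipartite_def directed_bipartite_induced_iff by blast
  then have "(b, b) \<in> E"
    \<comment> \<open>no open fork \<open>a \<rightarrow> b\<close>, \<open>a \<rightarrow> b\<close>, \<open>b \<rightarrow> c\<close>\<close>
    using fork unfolding open_fork_def by blast
  then have "far_from_sinks b"
    using abc(4) loop unfolding far_from_sinks_def loop_to_sink_def by blast
  then have "far_from_sinks x"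
    using far_from_sinks_connected[OF path fork component_connected[OF abc(2) xyz(1)]] by blast
  then show False
    using xyz(4) y_sink unfolding far_from_sinks_def by blast
qed

end

section \<open>Counting the words R_n\<close>

definition starts_01 :: "bool list \<Rightarrow> bool" where
  "starts_01 w \<longleftrightarrow> (\<exists>u. w = [False, True] @ u)"

definition ends_10 :: "bool list \<Rightarrow> bool" where
  "ends_10 w \<longleftrightarrow> (\<exists>u. w = u @ [True, False])"

definition has_101 :: "bool list \<Rightarrow> bool" where
  "has_101 w \<longleftrightarrow> (\<exists>u v. w = u @ [True, False, True] @ v)"

lemma starts_01_simps [simp]:
  "\<not> starts_01 []" "starts_01 (a # w) \<longleftrightarrow> \<not> a \<and> w \<noteq> [] \<and> hd w"
  unfolding starts_01_def by (cases w; auto)+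

lemma ends_10_simps [simp]:
  "\<not> ends_10 []" "ends_10 (a # w) \<longleftrightarrow> (a \<and> w = [False]) \<or> ends_10 w"
proof -
  show "\<not> ends_10 []"
    unfolding ends_10_def by simp
  show "ends_10 (a # w) \<longleftrightarrow> (a \<and> w = [False]) \<or> ends_10 w"
  proof
    assume "ends_10 (a # w)"
    then obtain u where "a # w = u @ [True, False]"
      unfolding ends_10_def by blast
    then show "(a \<and> w = [False]) \<or> ends_10 w"
      unfolding ends_10_def by (cases u) auto
  next
    assume "(a \<and> w = [False]) \<or> ends_10 w"
    then show "ends_10 (a # w)"
      unfolding ends_10_def by (auto intro: exI[of _ "[]"])
  qed
qed

lemma has_101_simps [simp]:
  "\<not> has_101 []" "has_101 (a # w) \<longleftrightarrow> (a \<and> starts_01 w) \<or> has_101 w"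
proof -
  show "\<not> has_101 []"
    unfolding has_101_def by simp
  show "has_101 (a # w) \<longleftrightarrow> (a \<and> starts_01 w) \<or> has_101 w"
  proof
    assume "has_101 (a # w)"
    then obtain u v where "a # w = u @ [True, False, True] @ v"
      unfolding has_101_def by blast
    then show "(a \<and> starts_01 w) \<or> has_101 w"
      unfolding has_101_def starts_01_def by (cases u) auto
  next
    assume "(a \<and> starts_01 w) \<or> has_101 w"
    then show "has_101 (a # w)"
      unfolding has_101_def starts_01_def by (auto intro: exI[of _ "[]"]) (metis Cons_eq_appendI)
  qed
qed

text \<open>States: 0 at the start and after a 1, 1 after a 0 read in state 0, 2 after any later 0.
  A 1 read in state 1, or the end in state 1, would complete a factor 01 at the start, 101, or
  10 at the end. The word 0 is rejected although it lies in \<open>R_words 1\<close>.\<close>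

fun R_accepts :: "nat \<Rightarrow> bool list \<Rightarrow> bool" where
  "R_accepts s [] \<longleftrightarrow> s \<noteq> 1"
| "R_accepts s (True # w) \<longleftrightarrow> s \<noteq> 1 \<and> R_accepts 0 w"
| "R_accepts s (False # w) \<longleftrightarrow> R_accepts (if s = 0 then 1 else 2) w"

lemma R_accepts_iff:
  "(R_accepts 0 w \<longleftrightarrow> \<not> ends_10 w \<and> \<not> has_101 w \<and> \<not> starts_01 w \<and> w \<noteq> [False])
   \<and> (R_accepts 1 w \<longleftrightarrow> (\<exists>w'. w = False # w' \<and> \<not> ends_10 w' \<and> \<not> has_101 w'))
   \<and> (R_accepts 2 w \<longleftrightarrow> \<not> ends_10 w \<and> \<not> has_101 w)"
proof (induction w)
  case (Cons a w)
  show ?case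
  proof (cases a)
    case True
    then show ?thesis using Cons by auto
  next
    case False
    then show ?thesis
      using Cons by (cases w) auto
  qed
qed simp

lemma R_words_eq_accepted:
  assumes "m \<noteq> 1"
  shows "R_words m = {w. length w = m \<and> R_accepts 0 w}"
proof (rule set_eqI)
  fix w :: "bool list"
  have "w \<in> R_words m \<longleftrightarrow> length w = m \<and> \<not> starts_01 w \<and> \<not> ends_10 w \<and> \<not> has_101 w"
    unfolding R_words_def starts_01_def ends_10_def has_101_def by simp
  moreover have "R_accepts 0 w \<longleftrightarrow> \<not> ends_10 w \<and> \<not> has_101 w \<and> \<not> starts_01 w \<and> w \<noteq> [False]"
    using R_accepts_iff by blast
  ultimately show "w \<in> R_words m \<longleftrightarrow> w \<in> {w. length w = m \<and> R_accepts 0 w}"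
    using assms by auto
qed

definition accepted_count :: "nat \<Rightarrow> nat \<Rightarrow> nat" where
  "accepted_count s m = card {w. length w = m \<and> R_accepts s w}"

lemma accepted_count_0 [simp]: "accepted_count s 0 = (if s = 1 then 0 else 1)"
proof -
  have "{w :: bool list. length w = 0 \<and> R_accepts s w} = (if s = 1 then {} else {[]})"
    by auto
  then show ?thesis
    by (simp add: accepted_count_def)
qed

lemma accepted_count_Suc [simp]:
  "accepted_count s (Suc m) =
     (if s = 1 then 0 else accepted_count 0 m) + accepted_count (if s = 0 then 1 else 2) m"
proof -
  let ?s' = "if s = 0 then 1 else 2"
  let ?T = "Cons True ` {w. length w = m \<and> R_accepts 0 w}"
  let ?F = "Cons False ` {w. length w = m \<and> R_accepts ?s' w}"
  let ?T' = "if s = 1 then {} else ?T"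
  have finite: "finite {w :: bool list. length w = m \<and> P w}" for P
    by (rule finite_subset[OF _ finite_lists_length_eq[of UNIV m]]) auto
  have "{w. length w = Suc m \<and> R_accepts s w} = ?T' \<union> ?F"
  proof (rule set_eqI)
    fix w :: "bool list"
    show "w \<in> {w. length w = Suc m \<and> R_accepts s w} \<longleftrightarrow> w \<in> ?T' \<union> ?F"
      by (cases w; cases "hd w") auto
  qed
  moreover have "card (?T' \<union> ?F) = card ?T' + card ?F"
    by (rule card_Un_disjoint) (use finite in auto)
  moreover have "card ?T = accepted_count 0 m" "card ?F = accepted_count ?s' m"
    unfolding accepted_count_def by (simp_all add: card_image)
  ultimately show ?thesis
    unfolding accepted_count_def by simp
qed

lemma accepted_count_recurrence:
  "accepted_count 0 (m + 4) = accepted_count 0 (m + 3) + accepted_count 0 (m + 2) + accepted_count 0 m"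
  by (simp add: numeral_eq_Suc)

lemma card_R_words: "2 \<le> m \<Longrightarrow> card (R_words m) = accepted_count 0 m"
  by (simp add: R_words_eq_accepted accepted_count_def)

lemma recurrence_growth_bounds:
  fixes a :: "nat \<Rightarrow> real" and \<alpha> c C :: real
  assumes rec: "\<And>k. a (k + 4) = a (k + 3) + a (k + 2) + a k"
    and root: "\<alpha> ^ 4 = \<alpha> ^ 3 + \<alpha> ^ 2 + 1"
    and init: "\<And>k. k < 4 \<Longrightarrow> c * \<alpha> ^ k \<le> a k \<and> a k \<le> C * \<alpha> ^ k"
  shows "c * \<alpha> ^ k \<le> a k \<and> a k \<le> C * \<alpha> ^ k"
proof (induction k rule: less_induct)
  case (less k)
  show ?case
  proof (cases "k < 4")
    case True
    then show ?thesis by (rule init)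
  next
    case False
    then obtain j where k: "k = j + 4"
      using le_Suc_ex[of 4 k] by (auto simp: add.commute)
    have "\<alpha> ^ k = \<alpha> ^ j * \<alpha> ^ 4"
      by (simp add: k power_add)
    also have "\<dots> = \<alpha> ^ (j + 3) + \<alpha> ^ (j + 2) + \<alpha> ^ j"
      by (simp add: root power_add algebra_simps power2_eq_square power3_eq_cube)
    finally have power_rec: "\<alpha> ^ k = \<alpha> ^ (j + 3) + \<alpha> ^ (j + 2) + \<alpha> ^ j" .
    have "c * \<alpha> ^ k = c * \<alpha> ^ (j + 3) + c * \<alpha> ^ (j + 2) + c * \<alpha> ^ j"
      "C * \<alpha> ^ k = C * \<alpha> ^ (j + 3) + C * \<alpha> ^ (j + 2) + C * \<alpha> ^ j"
      by (simp_all add: power_rec distrib_left)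
    moreover have "a k = a (j + 3) + a (j + 2) + a j"
      by (simp add: k rec)
    moreover have "c * \<alpha> ^ (j + 3) \<le> a (j + 3) \<and> a (j + 3) \<le> C * \<alpha> ^ (j + 3)"
      "c * \<alpha> ^ (j + 2) \<le> a (j + 2) \<and> a (j + 2) \<le> C * \<alpha> ^ (j + 2)"
      "c * \<alpha> ^ j \<le> a j \<and> a j \<le> C * \<alpha> ^ j"
      by (rule less.IH, simp add: k)+
    ultimately show ?thesis
      by linarith
  qed
qed

lemma R_words_growth:
  fixes \<alpha> :: real
  assumes "1 < \<alpha>" and root: "\<alpha> ^ 4 = \<alpha> ^ 3 + \<alpha> ^ 2 + 1"
  shows "(\<lambda>n. real (card (R_words (n - 1)))) \<in> \<Theta>(\<lambda>n. \<alpha> ^ n)"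
proof -
  let ?a = "\<lambda>k. real (accepted_count 0 k)"
  have init: "1 / \<alpha> ^ 3 * \<alpha> ^ k \<le> ?a k \<and> ?a k \<le> 4 * \<alpha> ^ k" if "k < 4" for k
  proof -
    have "1 \<le> ?a k" "?a k \<le> 4"
      using that by (auto simp: less_Suc_eq numeral_eq_Suc)
    moreover have "\<alpha> ^ k \<le> \<alpha> ^ 3" "1 \<le> \<alpha> ^ k"
      using that \<open>1 < \<alpha>\<close> by (auto intro: power_increasing)
    then have "1 / \<alpha> ^ 3 * \<alpha> ^ k \<le> 1" "4 \<le> 4 * \<alpha> ^ k"
      using \<open>1 < \<alpha>\<close> by simp_all
    ultimately show ?thesis
      by linarith
  qed
  have bounds: "1 / \<alpha> ^ 3 * \<alpha> ^ k \<le> ?a k \<and> ?a k \<le> 4 * \<alpha> ^ k" for k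
    by (rule recurrence_growth_bounds[OF _ root init]) (simp add: accepted_count_recurrence)
  show ?thesis
  proof (rule bigthetaI')
    show "1 / \<alpha> ^ 4 > 0" "4 / \<alpha> > 0"
      using \<open>1 < \<alpha>\<close> by auto
    have "1 / \<alpha> ^ 4 * \<alpha> ^ n \<le> real (card (R_words (n - 1)))
        \<and> real (card (R_words (n - 1))) \<le> 4 / \<alpha> * \<alpha> ^ n" if "3 \<le> n" for n
    proof -
      have "\<alpha> ^ n = \<alpha> * \<alpha> ^ (n - 1)" "\<alpha> ^ 4 = \<alpha> * \<alpha> ^ 3"
        using that by (simp_all add: power_eq_if)
      then have "1 / \<alpha> ^ 4 * \<alpha> ^ n = 1 / \<alpha> ^ 3 * \<alpha> ^ (n - 1)" "4 / \<alpha> * \<alpha> ^ n = 4 * \<alpha> ^ (n - 1)"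
        using \<open>1 < \<alpha>\<close> by simp_all
      then show ?thesis
        using bounds[of "n - 1"] card_R_words[of "n - 1"] that by simp
    qed
    then show "\<forall>\<^sub>F n in at_top. 1 / \<alpha> ^ 4 * norm (\<alpha> ^ n) \<le> norm (real (card (R_words (n - 1))))
        \<and> norm (real (card (R_words (n - 1)))) \<le> 4 / \<alpha> * norm (\<alpha> ^ n)"
      using \<open>1 < \<alpha>\<close> unfolding eventually_at_top_linorder by (intro exI[of _ 3]) simp
  qed
qed

lemma quartic_factor: "(x::real) ^ 4 - x ^ 3 - x ^ 2 - 1 = (x + 1) * (x * (x - 1) ^ 2 - 1)"
  by (simp add: algebra_simps power2_eq_square power3_eq_cube power4_eq_xxxx)

lemma cubic_strict_mono:
  fixes x y :: real
  assumes "1 \<le> x" "x < y"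
  shows "x * (x - 1) ^ 2 < y * (y - 1) ^ 2"
proof -
  have "x * (x - 1) ^ 2 \<le> x * (y - 1) ^ 2"
    using assms by (intro mult_left_mono power_mono) auto
  also have "\<dots> < y * (y - 1) ^ 2"
    using assms by (intro mult_strict_right_mono) auto
  finally show ?thesis .
qed

lemma cubic_mono:
  fixes x y :: real
  assumes "1 \<le> x" "x \<le> y"
  shows "x * (x - 1) ^ 2 \<le> y * (y - 1) ^ 2"
  using assms cubic_strict_mono[of x y] by (cases "x = y") auto

lemma quartic_root_bounds:
  fixes \<alpha> :: real
  assumes "0 < \<alpha>" "\<alpha> ^ 4 - \<alpha> ^ 3 - \<alpha> ^ 2 - 1 = 0"
  shows "1.754 < \<alpha> \<and> \<alpha> < 1.756"
proof -
  have root: "\<alpha> * (\<alpha> - 1) ^ 2 = 1"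
    using assms unfolding quartic_factor by simp
  have "1 < \<alpha>"
  proof (rule ccontr)
    assume "\<not> 1 < \<alpha>"
    then have "(1 - \<alpha>) ^ 2 < 1 ^ 2"
      using \<open>0 < \<alpha>\<close> by (intro power_strict_mono) auto
    moreover have "\<alpha> * (\<alpha> - 1) ^ 2 \<le> (\<alpha> - 1) ^ 2"
      using \<open>0 < \<alpha>\<close> \<open>\<not> 1 < \<alpha>\<close> by (intro mult_left_le_one_le) auto
    ultimately show False
      using root by (simp add: power2_commute)
  qed
  have "\<not> \<alpha> \<le> 1.754"
  proof
    assume "\<alpha> \<le> 1.754"
    then have "\<alpha> * (\<alpha> - 1) ^ 2 \<le> 1.754 * (1.754 - 1) ^ 2"
      using \<open>1 < \<alpha>\<close> by (intro cubic_mono) auto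
    with root show False by (simp add: power2_eq_square)
  qed
  moreover have "\<not> 1.756 \<le> \<alpha>"
  proof
    assume "1.756 \<le> \<alpha>"
    then have "1.756 * (1.756 - 1) ^ 2 \<le> \<alpha> * (\<alpha> - 1) ^ 2"
      by (intro cubic_mono) auto
    with root show False by (simp add: power2_eq_square)
  qed
  ultimately show ?thesis by simp
qed

lemma quartic_root_unique: "\<exists>!\<alpha>::real. 0 < \<alpha> \<and> \<alpha> ^ 4 - \<alpha> ^ 3 - \<alpha> ^ 2 - 1 = 0"
proof -
  have "\<exists>x::real. 1 \<le> x \<and> x \<le> 2 \<and> x * (x - 1) ^ 2 = 1"
    by (rule IVT') (auto intro!: continuous_intros)
  then obtain \<alpha> :: real where "1 \<le> \<alpha>" "\<alpha> * (\<alpha> - 1) ^ 2 = 1"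
    by blast
  then have \<alpha>: "0 < \<alpha> \<and> \<alpha> ^ 4 - \<alpha> ^ 3 - \<alpha> ^ 2 - 1 = 0"
    unfolding quartic_factor by simp
  have "\<beta> = \<alpha>" if \<beta>: "0 < \<beta> \<and> \<beta> ^ 4 - \<beta> ^ 3 - \<beta> ^ 2 - 1 = 0" for \<beta> :: real
  proof -
    have "1 \<le> \<beta>"
      using quartic_root_bounds[of \<beta>] \<beta> by simp
    moreover have "\<beta> * (\<beta> - 1) ^ 2 = \<alpha> * (\<alpha> - 1) ^ 2"
      using \<beta> \<open>\<alpha> * (\<alpha> - 1) ^ 2 = 1\<close> unfolding quartic_factor by auto
    ultimately show ?thesis
      using \<open>1 \<le> \<alpha>\<close> cubic_strict_mono[of \<alpha> \<beta>] cubic_strict_mono[of \<beta> \<alpha>] by fastforce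
  qed
  with \<alpha> show ?thesis by blast
qed

lemma quartic_root_growth:
  fixes \<alpha> :: real
  assumes "\<alpha> > 0 \<and> \<alpha>^4 - \<alpha>^3 - \<alpha>^2 - 1 = 0"
  shows "\<bar>\<alpha> - 1.755\<bar> < 0.001 \<and> (\<lambda>n. real (card (R_words (n - 1)))) \<in> \<Theta>(\<lambda>n. \<alpha> ^ n)"
proof -
  have "1.754 < \<alpha> \<and> \<alpha> < 1.756"
    using quartic_root_bounds assms by blast
  moreover have "\<alpha> ^ 4 = \<alpha> ^ 3 + \<alpha> ^ 2 + 1"
    using assms by simp
  ultimately show ?thesis
    using R_words_growth[of \<alpha>] by (simp add: abs_if)
qed

section \<open>Block decompositions and the lower bound\<close>

datatype block = One | Zeros nat

fun block_size :: "block \<Rightarrow> nat" where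
  "block_size One = 1"
| "block_size (Zeros k) = Suc k"

fun block_word :: "block \<Rightarrow> bool list" where
  "block_word One = [True]"
| "block_word (Zeros k) = replicate (Suc k) False"

definition blocks_word :: "block list \<Rightarrow> bool list" where
  "blocks_word bs = concat (map block_word bs)"

fun valid_blocks :: "block list \<Rightarrow> bool" where
  "valid_blocks [] \<longleftrightarrow> True"
| "valid_blocks (One # bs) \<longleftrightarrow> valid_blocks bs"
| "valid_blocks (Zeros k # bs) \<longleftrightarrow> 0 < k \<and> (bs = [] \<or> hd bs = One) \<and> valid_blocks bs"

definition total_size :: "block list \<Rightarrow> nat" where
  "total_size bs = sum_list (map block_size bs)"

lemma block_size_pos [simp]: "0 < block_size b" "block_size b \<noteq> 0"
  by (cases b; simp)+

lemma total_size_simps [simp]: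
  "total_size [] = 0" "total_size (b # bs) = block_size b + total_size bs"
  by (simp_all add: total_size_def)

lemma total_size_eq_0_iff: "total_size bs = 0 \<longleftrightarrow> bs = []"
  by (cases bs) auto

lemma length_blocks_word: "length (blocks_word bs) = total_size bs"
proof -
  have "length (block_word b) = block_size b" for b
    by (cases b) auto
  then show ?thesis
    by (induction bs) (auto simp: blocks_word_def)
qed

lemma R_accepts_blocks_word:
  "(R_accepts 0 w \<longrightarrow> (\<exists>bs. valid_blocks bs \<and> blocks_word bs = w))
   \<and> (R_accepts 2 w \<longrightarrow> (\<exists>k bs. valid_blocks bs \<and> (bs = [] \<or> hd bs = One)
        \<and> w = replicate k False @ blocks_word bs))"
proof (induction w)
  case Nil
  show ?case
    by (auto simp: blocks_word_def intro!: exI[of _ "[]"])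
next
  case (Cons a w)
  show ?case
  proof (cases a)
    case True
    have one: "\<exists>bs. valid_blocks (One # bs) \<and> blocks_word (One # bs) = a # w"
      if "R_accepts s (a # w)" for s
      using that Cons.IH True by (auto simp: blocks_word_def)
    show ?thesis
    proof (intro conjI impI)
      assume "R_accepts 0 (a # w)"
      then show "\<exists>bs. valid_blocks bs \<and> blocks_word bs = a # w"
        using one by blast
    next
      assume "R_accepts 2 (a # w)"
      then obtain bs where "valid_blocks (One # bs)" "blocks_word (One # bs) = a # w"
        using one by blast
      then show "\<exists>k bs. valid_blocks bs \<and> (bs = [] \<or> hd bs = One) \<and> a # w = replicate k False @ blocks_word bs"
        by (intro exI[of _ 0] exI[of _ "One # bs"]) simp
    qed
  next
    case False
    show ?thesis
    proof (intro conjI impI)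
      assume "R_accepts 0 (a # w)"
      then have "R_accepts 1 w"
        using False by simp
      then obtain w' where w: "w = False # w'"
        by (cases w; cases "hd w") auto
      with \<open>R_accepts 1 w\<close> have "R_accepts 2 w"
        by simp
      then obtain k bs where kbs: "valid_blocks bs" "bs = [] \<or> hd bs = One"
          "w = replicate k False @ blocks_word bs"
        using Cons.IH by blast
      moreover have "0 < k"
        using kbs w by (cases k; cases bs) (auto simp: blocks_word_def)
      ultimately show "\<exists>bs. valid_blocks bs \<and> blocks_word bs = a # w"
        using False by (intro exI[of _ "Zeros k # bs"]) (auto simp: blocks_word_def)
    next
      assume "R_accepts 2 (a # w)"
      then obtain k bs where "valid_blocks bs" "bs = [] \<or> hd bs = One"
          "w = replicate k False @ blocks_word bs"
        using Cons.IH False by auto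
      then show "\<exists>k bs. valid_blocks bs \<and> (bs = [] \<or> hd bs = One) \<and> a # w = replicate k False @ blocks_word bs"
        using False by (intro exI[of _ "Suc k"] exI[of _ bs]) simp
    qed
  qed
qed

lemma R_words_subset_blocks_words:
  assumes "2 \<le> m"
  shows "R_words m \<subseteq> blocks_word ` {bs. valid_blocks bs \<and> total_size bs = m}"
proof
  fix w assume "w \<in> R_words m"
  then have "R_accepts 0 w" "length w = m"
    using R_words_eq_accepted assms by auto
  then obtain bs where "valid_blocks bs" "blocks_word bs = w"
    using R_accepts_blocks_word by blast
  moreover from this have "total_size bs = m"
    using \<open>length w = m\<close> length_blocks_word by metis
  ultimately show "w \<in> blocks_word ` {bs. valid_blocks bs \<and> total_size bs = m}"
    by (intro image_eqI[of _ _ bs]) auto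
qed

definition blocks_term :: "(block \<Rightarrow> btree) \<Rightarrow> block list \<Rightarrow> btree" where
  "blocks_term f bs = foldl (\<lambda>t b. Node t (f b)) Leaf bs"

lemma blocks_term_Nil [simp]: "blocks_term f [] = Leaf"
  by (simp add: blocks_term_def)

lemma blocks_term_snoc [simp]: "blocks_term f (bs @ [b]) = Node (blocks_term f bs) (f b)"
  by (simp add: blocks_term_def)

lemma total_size_append [simp]: "total_size (bs @ cs) = total_size bs + total_size cs"
  by (simp add: total_size_def)

lemma leaves_blocks_term:
  "(\<And>b. leaves (f b) = block_size b) \<Longrightarrow> leaves (blocks_term f bs) = Suc (total_size bs)"
  by (induction bs rule: rev_induct) auto

fun blocks_defined :: "('v \<times> 'v) set \<Rightarrow> (block \<Rightarrow> btree) \<Rightarrow> block list \<Rightarrow> 'v \<Rightarrow> 'v list \<Rightarrow> bool" where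
  "blocks_defined E f [] x ys \<longleftrightarrow> True"
| "blocks_defined E f (b # bs) x ys \<longleftrightarrow>
     (x, hd ys) \<in> E \<and> ga_defined E (f b) (take (block_size b) ys)
     \<and> blocks_defined E f bs x (drop (block_size b) ys)"

lemma blocks_defined_append:
  "length ys = total_size bs + total_size cs \<Longrightarrow>
   blocks_defined E f (bs @ cs) x ys \<longleftrightarrow>
   blocks_defined E f bs x (take (total_size bs) ys) \<and> blocks_defined E f cs x (drop (total_size bs) ys)"
proof (induction bs arbitrary: ys)
  case (Cons b bs)
  have "take (block_size b) (take (block_size b + total_size bs) ys) = take (block_size b) ys"
    "drop (block_size b) (take (block_size b + total_size bs) ys) = take (total_size bs) (drop (block_size b) ys)"
    "hd (take (block_size b + total_size bs) ys) = hd ys"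
    by (simp_all add: min_def drop_take)
  with Cons show ?case
    by (simp add: add.commute)
qed simp

lemma ga_defined_blocks_term:
  assumes leaves: "\<And>b. leaves (f b) = block_size b"
  shows "length ys = total_size bs \<Longrightarrow>
    ga_defined E (blocks_term f bs) (x # ys) \<longleftrightarrow> blocks_defined E f bs x ys"
proof (induction bs arbitrary: ys rule: rev_induct)
  case (snoc b bs)
  have "leaves (blocks_term f bs) = Suc (total_size bs)"
    using leaves_blocks_term leaves .
  moreover have "length (drop (total_size bs) ys) = block_size b"
    using snoc.prems by simp
  moreover have "ga_defined E (blocks_term f bs) (x # take (total_size bs) ys)
      \<longleftrightarrow> blocks_defined E f bs x (take (total_size bs) ys)"
    using snoc by simp
  ultimately show ?case
    using blocks_defined_append[of ys bs "[b]" E f x] snoc.prems leaves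
    by (auto simp: conj_commute)
qed simp

lemma blocks_defined_Cons_append:
  assumes "length seg = block_size b"
  shows "blocks_defined E f (b # bs) x (seg @ rest) \<longleftrightarrow>
    (x, hd seg) \<in> E \<and> ga_defined E (f b) seg \<and> blocks_defined E f bs x rest"
proof -
  have "seg \<noteq> []"
    using assms by auto
  then show ?thesis
    using assms by simp
qed

definition fills :: "'v set \<Rightarrow> ('v \<times> 'v) set \<Rightarrow> (block \<Rightarrow> btree) \<Rightarrow> 'v \<Rightarrow> (block \<Rightarrow> 'v list) \<Rightarrow> bool"
  where "fills V E f x seg \<longleftrightarrow> (\<forall>b. length (seg b) = block_size b \<and> set (seg b) \<subseteq> V
      \<and> (x, hd (seg b)) \<in> E \<and> ga_defined E (f b) (seg b))"

lemma blocks_defined_concat: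
  assumes "fills V E f x seg"
  shows "length (concat (map seg cs)) = total_size cs \<and> set (concat (map seg cs)) \<subseteq> V
    \<and> blocks_defined E f cs x (concat (map seg cs))"
proof (induction cs)
  case (Cons c cs)
  then show ?case
    using assms blocks_defined_Cons_append[of "seg c" c E f cs x] unfolding fills_def by auto
qed simp

definition separates ::
  "'v set \<Rightarrow> ('v \<times> 'v) set \<Rightarrow> (block \<Rightarrow> btree) \<Rightarrow> 'v \<Rightarrow> block list \<Rightarrow> block list \<Rightarrow> bool"
  where "separates V E f x bs bs' \<longleftrightarrow> (\<exists>ys. length ys = total_size bs \<and> set ys \<subseteq> V
      \<and> blocks_defined E f bs x ys \<noteq> blocks_defined E f bs' x ys)"

lemma separates_sym:
  "separates V E f x bs bs' \<Longrightarrow> total_size bs = total_size bs' \<Longrightarrow> separates V E f x bs' bs"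
  unfolding separates_def by metis

lemma separates_Cons:
  assumes "fills V E f x seg" "separates V E f x bs bs'"
  shows "separates V E f x (b # bs) (b # bs')"
proof -
  obtain ys where ys: "length ys = total_size bs" "set ys \<subseteq> V"
      "blocks_defined E f bs x ys \<noteq> blocks_defined E f bs' x ys"
    using assms(2) unfolding separates_def by blast
  have seg: "length (seg b) = block_size b" "set (seg b) \<subseteq> V"
      "(x, hd (seg b)) \<in> E" "ga_defined E (f b) (seg b)"
    using assms(1) unfolding fills_def by auto
  show ?thesis
    unfolding separates_def
    using ys seg blocks_defined_Cons_append[OF seg(1), of E f _ x ys]
    by (intro exI[of _ "seg b @ ys"]) auto
qed

lemma valid_blocks_head_size_neq:
  assumes "valid_blocks (b # cs)" "valid_blocks (b' # cs')" "b \<noteq> b'"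
  shows "block_size b \<noteq> block_size b'"
  using assms by (cases b; cases b') auto

lemma separates_valid_blocks:
  assumes fills: "fills V E f x seg"
    and heads: "\<And>b cs k cs'. valid_blocks (b # cs) \<Longrightarrow> valid_blocks (Zeros k # cs') \<Longrightarrow>
      block_size b < Suc k \<Longrightarrow> total_size (b # cs) = total_size (Zeros k # cs') \<Longrightarrow>
      separates V E f x (b # cs) (Zeros k # cs')"
  shows "valid_blocks bs \<Longrightarrow> valid_blocks bs' \<Longrightarrow> total_size bs = total_size bs' \<Longrightarrow> bs \<noteq> bs' \<Longrightarrow>
    separates V E f x bs bs'"
proof (induction bs arbitrary: bs')
  case Nil
  then show ?case
    using total_size_eq_0_iff[of bs'] by simp
next
  case (Cons b cs)
  obtain b' cs' where bs': "bs' = b' # cs'"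
    using Cons.prems total_size_eq_0_iff[of bs'] by (cases bs') auto
  show ?case
  proof (cases "b = b'")
    case True
    then have "separates V E f x cs cs'"
      using Cons bs' by (cases b) auto
    then show ?thesis
      using separates_Cons[OF fills] True bs' by blast
  next
    case False
    then have "block_size b < block_size b' \<or> block_size b' < block_size b"
      using valid_blocks_head_size_neq Cons.prems bs' by fastforce
    then show ?thesis
    proof
      assume "block_size b < block_size b'"
      then obtain k where "b' = Zeros k"
        by (cases b'; cases b) auto
      then show ?thesis
        using heads Cons.prems bs' \<open>block_size b < block_size b'\<close> by simp
    next
      assume "block_size b' < block_size b"
      then obtain k where "b = Zeros k"
        by (cases b; cases b') auto
      then have "separates V E f x (b' # cs') (b # cs)"
        using heads Cons.prems bs' \<open>block_size b' < block_size b\<close> by simp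
      then show ?thesis
        using separates_sym[of V E f x "b' # cs'" "b # cs"] Cons.prems(3) bs' by simp
    qed
  qed
qed

fun right_comb :: "nat \<Rightarrow> btree" where
  "right_comb 0 = Leaf"
| "right_comb (Suc k) = Node Leaf (right_comb k)"

lemma leaves_right_comb [simp]: "leaves (right_comb k) = Suc k"
  by (induction k) auto

lemma ga_defined_right_comb_snoc:
  assumes "(x, x) \<in> E" "(x, u) \<in> E"
  shows "ga_defined E (right_comb k) (replicate k x @ [u])"
proof (induction k)
  case (Suc k)
  have "(x, hd (replicate k x @ [u])) \<in> E"
    using assms by (cases k) auto
  with Suc show ?case
    by simp
qed simp

lemma ga_defined_right_comb_sink:
  "(\<forall>t. (u, t) \<notin> E) \<Longrightarrow> length zs = Suc k \<Longrightarrow> j < k \<Longrightarrow> zs ! j = u \<Longrightarrow>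
   \<not> ga_defined E (right_comb k) zs"
proof (induction k arbitrary: zs j)
  case (Suc k)
  then obtain z zs' where zs: "zs = z # zs'"
    by (cases zs) auto
  show ?case
  proof (cases j)
    case 0
    then show ?thesis using Suc.prems zs by simp
  next
    case (Suc j')
    then have "\<not> ga_defined E (right_comb k) zs'"
      using Suc.IH[of zs' j'] Suc.prems zs by auto
    then show ?thesis
      using zs by simp
  qed
qed simp

fun block_left_comb :: "block \<Rightarrow> btree" where
  "block_left_comb One = Leaf"
| "block_left_comb (Zeros k) = left_comb k"

fun block_right_comb :: "block \<Rightarrow> btree" where
  "block_right_comb One = Leaf"
| "block_right_comb (Zeros k) = right_comb k"

lemma leaves_block_left_comb [simp]: "leaves (block_left_comb b) = block_size b"
  by (cases b) auto

lemma leaves_block_right_comb [simp]: "leaves (block_right_comb b) = block_size b"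
  by (cases b) auto

lemma blocks_defined_Cons_Cons_hd:
  "blocks_defined E f (b # c # cs) x ys \<Longrightarrow> (x, hd (drop (block_size b) ys)) \<in> E"
  by simp

definition star_segment :: "'v \<Rightarrow> 'v \<Rightarrow> block \<Rightarrow> 'v list" where
  "star_segment h l b = h # replicate (block_size b - 1) l"

lemma fills_star_segment:
  assumes "(x, h) \<in> E" "(h, l) \<in> E" "h \<in> V" "l \<in> V"
  shows "fills V E block_left_comb x (star_segment h l)"
  unfolding fills_def
proof (intro allI conjI)
  fix b
  show "length (star_segment h l b) = block_size b"
    by (simp add: star_segment_def)
  show "set (star_segment h l b) \<subseteq> V" "(x, hd (star_segment h l b)) \<in> E"
    using assms by (auto simp: star_segment_def)
  show "ga_defined E (block_left_comb b) (star_segment h l b)"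
    using assms by (cases b) (simp_all add: star_segment_def ga_defined_left_comb hd_dominates_def)
qed

lemma fills_loop:
  assumes "(x, x) \<in> E" "x \<in> V"
  shows "fills V E block_right_comb x (\<lambda>b. replicate (block_size b) x)"
  unfolding fills_def
proof (intro allI conjI)
  fix b
  show "length (replicate (block_size b) x) = block_size b"
    "set (replicate (block_size b) x) \<subseteq> V" "(x, hd (replicate (block_size b) x)) \<in> E"
    using assms by simp_all
  show "ga_defined E (block_right_comb b) (replicate (block_size b) x)"
  proof (cases b)
    case (Zeros k)
    then show ?thesis
      using ga_defined_right_comb_snoc[OF assms(1,1), of k] by (simp add: replicate_append_same)
  qed simp
qed

lemma separates_nontransitive_path:
  assumes E: "(x, u) \<in> E" "(u, v) \<in> E" "(x, v) \<notin> E" and V: "u \<in> V" "v \<in> V"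
    and size: "block_size b < Suc k"
    and total: "total_size (b # cs) = total_size (Zeros k # cs')"
  shows "separates V E block_left_comb x (b # cs) (Zeros k # cs')"
proof -
  let ?ys = "concat (map (star_segment u v) (Zeros k # cs'))"
  have ys: "length ?ys = total_size (Zeros k # cs')" "set ?ys \<subseteq> V"
      "blocks_defined E block_left_comb (Zeros k # cs') x ?ys"
    using blocks_defined_concat[OF fills_star_segment[OF E(1,2) V]] by blast+
  obtain c cs2 where "cs = c # cs2"
    using total size by (cases cs) auto
  moreover obtain i where "block_size b = Suc i" "i < k"
    using size by (cases "block_size b") auto
  then have "hd (drop (block_size b) ?ys) = v"
    using ys(1) by (simp add: hd_drop_conv_nth star_segment_def nth_append)
  ultimately have "\<not> blocks_defined E block_left_comb (b # cs) x ?ys"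
    using blocks_defined_Cons_Cons_hd E(3) by metis
  then show ?thesis
    unfolding separates_def using ys total by metis
qed

lemma separates_open_fork_One:
  assumes E: "(x, u) \<in> E" "(x, v) \<in> E" "(u, v) \<notin> E" "(v, l) \<in> E"
    and V: "u \<in> V" "v \<in> V" "l \<in> V"
    and "0 < k" and total: "total_size (One # cs) = total_size (Zeros k # cs')"
  shows "separates V E block_left_comb x (One # cs) (Zeros k # cs')"
proof -
  let ?F = "concat (map (star_segment v l) cs)"
  have F: "length ?F = total_size cs" "set ?F \<subseteq> V" "blocks_defined E block_left_comb cs x ?F"
    using blocks_defined_concat[OF fills_star_segment[OF E(2,4) V(2,3)]] by blast+
  obtain c cs2 where "cs = c # cs2"
    using total \<open>0 < k\<close> by (cases cs) auto
  then obtain R where R: "?F = v # R"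
    by (simp add: star_segment_def)
  have defined: "blocks_defined E block_left_comb (One # cs) x (u # ?F)"
    using blocks_defined_Cons_append[of "[u]" One E _ cs x ?F] E(1) F(3) by simp
  have "length (take (Suc k) (u # v # R)) = Suc k"
    using total F(1) unfolding R by simp
  moreover have "\<not> hd_dominates E (take (Suc k) (u # v # R))"
    using \<open>0 < k\<close> E(3) by (cases k) (auto simp: hd_dominates_def)
  ultimately have "\<not> ga_defined E (left_comb k) (take (Suc k) (u # v # R))"
    using ga_defined_left_comb by blast
  then have "\<not> blocks_defined E block_left_comb (Zeros k # cs') x (u # ?F)"
    unfolding R by simp
  then show ?thesis
    unfolding separates_def using defined F V total
    by (intro exI[of _ "u # ?F"]) auto
qed

lemma separates_open_fork_Zeros:
  assumes E: "(x, w) \<in> E" "(x, z) \<in> E" "(w, z) \<notin> E" "(w, t) \<in> E"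
    and V: "w \<in> V" "z \<in> V" "t \<in> V"
    and "j < k" "valid_blocks (Zeros j # cs)"
    and total: "total_size (Zeros j # cs) = total_size (Zeros k # cs')"
  shows "separates V E block_left_comb x (Zeros j # cs) (Zeros k # cs')"
proof -
  obtain cs2 where cs: "cs = One # cs2"
    using total \<open>j < k\<close> \<open>valid_blocks (Zeros j # cs)\<close> by (cases cs) auto
  let ?F = "concat (map (star_segment w t) cs2)"
  let ?ys = "star_segment w t (Zeros j) @ [z] @ ?F"
  have F: "length ?F = total_size cs2" "set ?F \<subseteq> V" "blocks_defined E block_left_comb cs2 x ?F"
    using blocks_defined_concat[OF fills_star_segment[OF E(1,4) V(1,3)]] by blast+
  have "ga_defined E (left_comb j) (w # replicate j t)"
    using E(4) by (simp add: ga_defined_left_comb hd_dominates_def)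
  then have defined: "blocks_defined E block_left_comb (Zeros j # cs) x ?ys"
    using blocks_defined_Cons_append[of "star_segment w t (Zeros j)" "Zeros j" E _ cs x]
      blocks_defined_Cons_append[of "[z]" One E _ cs2 x ?F] E(1,2) F(3)
    by (simp add: cs star_segment_def)
  have "z \<in> set (tl (take (Suc k) ?ys))"
    using \<open>j < k\<close> by (simp add: star_segment_def take_append) (cases "k - j"; simp)
  then have "\<not> hd_dominates E (take (Suc k) ?ys)"
    using E(3) by (auto simp: hd_dominates_def star_segment_def)
  moreover have "length (take (Suc k) ?ys) = Suc k"
    using total F(1) cs by (simp add: star_segment_def)
  ultimately have "\<not> ga_defined E (left_comb k) (take (Suc k) ?ys)"
    using ga_defined_left_comb by blast
  then have "\<not> blocks_defined E block_left_comb (Zeros k # cs') x ?ys"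
    by simp
  then show ?thesis
    unfolding separates_def using defined F V total cs
    by (intro exI[of _ ?ys]) (auto simp: star_segment_def)
qed

lemma separates_loop_to_sink:
  assumes E: "(x, x) \<in> E" "(x, u) \<in> E" "\<forall>t. (u, t) \<notin> E" and V: "x \<in> V" "u \<in> V"
    and size: "block_size b < Suc k"
    and total: "total_size (b # cs) = total_size (Zeros k # cs')"
  shows "separates V E block_right_comb x (b # cs) (Zeros k # cs')"
proof -
  let ?seg = "replicate (block_size b - 1) x @ [u]"
  let ?F = "concat (map (\<lambda>c. replicate (block_size c) x) cs)"
  have F: "length ?F = total_size cs" "set ?F \<subseteq> V" "blocks_defined E block_right_comb cs x ?F"
    using blocks_defined_concat[OF fills_loop[OF E(1) V(1)]] by blast+
  have seg: "length ?seg = block_size b" "(x, hd ?seg) \<in> E"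
    using E by (simp_all add: hd_append)
  have "ga_defined E (block_right_comb b) ?seg"
    using ga_defined_right_comb_snoc[OF E(1,2)] by (cases b) auto
  then have defined: "blocks_defined E block_right_comb (b # cs) x (?seg @ ?F)"
    using blocks_defined_Cons_append[OF seg(1)] seg(2) F(3) by blast
  have "length (take (Suc k) (?seg @ ?F)) = Suc k"
    using total F(1) by simp
  moreover have "block_size b - 1 < k"
    using size by (cases "block_size b") auto
  moreover have "take (Suc k) (?seg @ ?F) ! (block_size b - 1) = u"
    using size by (simp add: nth_append)
  ultimately have "\<not> ga_defined E (right_comb k) (take (Suc k) (?seg @ ?F))"
    using ga_defined_right_comb_sink[OF E(3)] by blast
  then have "\<not> blocks_defined E block_right_comb (Zeros k # cs') x (?seg @ ?F)"
    by simp
  moreover have "length (?seg @ ?F) = total_size (b # cs)" "set (?seg @ ?F) \<subseteq> V"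
    using seg(1) F(1,2) V by auto
  ultimately show ?thesis
    unfolding separates_def using defined by blast
qed

context digraph
begin

lemma inj_on_blocks_term_fun:
  assumes "x \<in> V" and leaves: "\<And>b. leaves (f b) = block_size b" and fills: "fills V E f x seg"
    and heads: "\<And>b cs k cs'. valid_blocks (b # cs) \<Longrightarrow> valid_blocks (Zeros k # cs') \<Longrightarrow>
      block_size b < Suc k \<Longrightarrow> total_size (b # cs) = total_size (Zeros k # cs') \<Longrightarrow>
      separates V E f x (b # cs) (Zeros k # cs')"
  shows "inj_on (\<lambda>bs. term_fun (Suc m) (blocks_term f bs)) {bs. valid_blocks bs \<and> total_size bs = m}"
proof (rule inj_onI, rule ccontr)
  fix bs bs'
  assume bs: "bs \<in> {bs. valid_blocks bs \<and> total_size bs = m}"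
    and bs': "bs' \<in> {bs. valid_blocks bs \<and> total_size bs = m}"
    and eq: "term_fun (Suc m) (blocks_term f bs) = term_fun (Suc m) (blocks_term f bs')"
    and "bs \<noteq> bs'"
  then have "separates V E f x bs bs'"
    using separates_valid_blocks[OF fills heads] by simp
  then obtain ys where ys: "length ys = m" "set ys \<subseteq> V"
      "blocks_defined E f bs x ys \<noteq> blocks_defined E f bs' x ys"
    unfolding separates_def using bs by auto
  have "leaves (blocks_term f bs) = Suc m" "leaves (blocks_term f bs') = Suc m"
    using leaves_blocks_term[OF leaves] bs bs' by auto
  with eq have "\<forall>xs. length xs = Suc m \<longrightarrow> set xs \<subseteq> V \<longrightarrow>
      ga_defined E (blocks_term f bs) xs = ga_defined E (blocks_term f bs') xs"
    using term_op_ga_eq_iff by blast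
  then have "ga_defined E (blocks_term f bs) (x # ys) = ga_defined E (blocks_term f bs') (x # ys)"
    using ys(1,2) \<open>x \<in> V\<close> by simp
  moreover have "length ys = total_size bs" "length ys = total_size bs'"
    using ys(1) bs bs' by simp_all
  ultimately show False
    using ga_defined_blocks_term[OF leaves] ys(3) by metis
qed

lemma card_R_words_le_spectrum_if_separating:
  assumes "x \<in> V" and leaves: "\<And>b. leaves (f b) = block_size b" and fills: "fills V E f x seg"
    and heads: "\<And>b cs k cs'. valid_blocks (b # cs) \<Longrightarrow> valid_blocks (Zeros k # cs') \<Longrightarrow>
      block_size b < Suc k \<Longrightarrow> total_size (b # cs) = total_size (Zeros k # cs') \<Longrightarrow>
      separates V E f x (b # cs) (Zeros k # cs')"
    and "3 \<le> n"
  shows "card (R_words (n - 1)) \<le> spectrum n"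
proof -
  let ?B = "{bs. valid_blocks bs \<and> total_size bs = n - 1}"
  let ?h = "\<lambda>bs. term_fun n (blocks_term f bs)"
  let ?parse = "inv_into ?B blocks_word"
  have R_words: "R_words (n - 1) \<subseteq> blocks_word ` ?B"
    using R_words_subset_blocks_words \<open>3 \<le> n\<close> by simp
  then have parse: "?parse ` R_words (n - 1) \<subseteq> ?B"
    by (intro image_subsetI inv_into_into) blast
  have "inj_on ?h ?B"
    using inj_on_blocks_term_fun[OF assms(1-4), of "n - 1"] \<open>3 \<le> n\<close> by simp
  then have "inj_on (?h \<circ> ?parse) (R_words (n - 1))"
    using R_words parse by (intro comp_inj_on inj_on_inv_into) (auto intro: inj_on_subset)
  moreover have "(?h \<circ> ?parse) ` R_words (n - 1) \<subseteq> term_fun n ` bracketings n"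
    using parse leaves_blocks_term[OF leaves] \<open>3 \<le> n\<close> by (auto simp: bracketings_def)
  ultimately show ?thesis
    unfolding assoc_spectrum_def by (rule card_inj_on_le[OF _ _ finite_term_funs])
qed


lemma card_R_words_le_spectrum_path:
  assumes nontransitive_path "3 \<le> n"
  shows "card (R_words (n - 1)) \<le> spectrum n"
proof -
  obtain x u v where E: "(x, u) \<in> E" "(u, v) \<in> E" "(x, v) \<notin> E"
    using assms(1) unfolding nontransitive_path_def by blast
  then have V: "x \<in> V" "u \<in> V" "v \<in> V"
    using edges_subset by auto
  show ?thesis
    using separates_nontransitive_path[OF E V(2,3)]
    by (intro card_R_words_le_spectrum_if_separating[OF V(1) leaves_block_left_comb
          fills_star_segment[OF E(1,2) V(2,3)] _ \<open>3 \<le> n\<close>])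
qed

lemma card_R_words_le_spectrum_fork:
  assumes open_fork "3 \<le> n"
  shows "card (R_words (n - 1)) \<le> spectrum n"
proof -
  obtain x w z t where E: "(x, w) \<in> E" "(x, z) \<in> E" "(w, z) \<notin> E" "(w, t) \<in> E"
    using assms(1) unfolding open_fork_def by blast
  then have V: "x \<in> V" "w \<in> V" "z \<in> V" "t \<in> V"
    using edges_subset by auto
  \<comment> \<open>a head \<open>One\<close> needs a non-sink after it: swap \<open>w\<close> and \<open>z\<close> if \<open>z\<close> is a sink\<close>
  obtain u v l where E': "(x, u) \<in> E" "(x, v) \<in> E" "(u, v) \<notin> E" "(v, l) \<in> E"
  proof (cases "\<exists>t'. (z, t') \<in> E")
    case True
    then obtain t' where "(z, t') \<in> E" by blast
    then show ?thesis using that[of w z t'] E by blast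
  next
    case False
    then show ?thesis using that[of z w t] E by blast
  qed
  then have V': "u \<in> V" "v \<in> V" "l \<in> V"
    using edges_subset by auto
  have "separates V E block_left_comb x (b # cs) (Zeros k # cs')"
    if "valid_blocks (b # cs)" "valid_blocks (Zeros k # cs')" "block_size b < Suc k"
      "total_size (b # cs) = total_size (Zeros k # cs')" for b cs k cs'
  proof (cases b)
    case One
    then show ?thesis
      using separates_open_fork_One[OF E' V'] that by simp
  next
    case (Zeros j)
    then show ?thesis
      using separates_open_fork_Zeros[OF E V(2-4)] that by simp
  qed
  then show ?thesis
    by (intro card_R_words_le_spectrum_if_separating[OF V(1) leaves_block_left_comb
          fills_star_segment[OF E(1,4) V(2,4)] _ \<open>3 \<le> n\<close>])
qed

lemma card_R_words_le_spectrum_loop: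
  assumes loop_to_sink "3 \<le> n"
  shows "card (R_words (n - 1)) \<le> spectrum n"
proof -
  obtain x u where E: "(x, x) \<in> E" "(x, u) \<in> E" "\<forall>t. (u, t) \<notin> E"
    using assms(1) unfolding loop_to_sink_def by blast
  then have V: "x \<in> V" "u \<in> V"
    using edges_subset by auto
  show ?thesis
    using separates_loop_to_sink[OF E V]
    by (intro card_R_words_le_spectrum_if_separating[OF V(1) leaves_block_right_comb
          fills_loop[OF E(1) V(1)] _ \<open>3 \<le> n\<close>])
qed

lemma card_R_words_le_spectrum:
  assumes "\<not> associative_on (ga_carrier V) (ga_op E)" "\<not> bipartite_case" "3 \<le> n"
  shows "card (R_words (n - 1)) \<le> spectrum n"
proof -
  obtain v where "v \<in> V" "\<not> induced_assoc (component v)" "\<not> induced_bipartite (component v)"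
    using assms(1,2) associative_if_components_assoc
    unfolding bipartite_case_def weak_components_eq by blast
  then have "nontransitive_path \<or> open_fork \<or> loop_to_sink"
    by (rule configuration_if_not_induced_assoc_or_bipartite)
  then show ?thesis
    using card_R_words_le_spectrum_path card_R_words_le_spectrum_fork
      card_R_words_le_spectrum_loop \<open>3 \<le> n\<close> by blast
qed

lemma spectrum_all_1_iff: "(\<forall>n\<ge>1. spectrum n = 1) \<longleftrightarrow> associative_on (ga_carrier V) (ga_op E)"
proof
  assume "\<forall>n\<ge>1. spectrum n = 1"
  then have "spectrum 3 = 1"
    by simp
  then show "associative_on (ga_carrier V) (ga_op E)"
    using spectrum_3_ge_2 by fastforce
qed (use spectrum_eq_1 in blast)

lemma spectrum_all_2_iff: "(\<forall>n\<ge>3. spectrum n = 2) \<longleftrightarrow> bipartite_case"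
proof
  assume all_2: "\<forall>n\<ge>3. spectrum n = 2"
  show bipartite_case
  proof (rule ccontr)
    assume "\<not> bipartite_case"
    moreover have "\<not> associative_on (ga_carrier V) (ga_op E)"
      using all_2 spectrum_eq_1[of 3] by auto
    ultimately have "card (R_words 3) \<le> spectrum 4"
      using card_R_words_le_spectrum[of 4] by simp
    moreover have "card (R_words 3) = 4"
      by (simp add: card_R_words numeral_eq_Suc)
    ultimately show False
      using all_2 by simp
  qed
qed (use spectrum_eq_2 in blast)

end

theorem theorem8p6:
  fixes V :: "'v set" and E :: "('v \<times> 'v) set"
  assumes "E \<subseteq> V \<times> V"
  defines "s \<equiv> assoc_spectrum (ga_carrier V) (ga_op E)"
  defines "P1 \<equiv> (\<forall>n\<ge>1. s n = 1)"
  defines "P2 \<equiv> (\<forall>n\<ge>3. s n = 2)"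
  defines "P3 \<equiv> (\<forall>n\<ge>3. card (R_words (n - 1)) \<le> s n)"
  shows "(P1 \<longleftrightarrow> associative_on (ga_carrier V) (ga_op E))
    \<and> (P2 \<longleftrightarrow>
         (\<forall>C\<in>weak_components V E.
             associative_on (ga_carrier C) (ga_op (induced_edges E C))
           \<or> (directed_bipartite C (induced_edges E C) \<and> induced_edges E C \<noteq> {}))
       \<and> (\<exists>C\<in>weak_components V E.
             directed_bipartite C (induced_edges E C) \<and> induced_edges E C \<noteq> {}))
    \<and> ((P1 \<and> \<not> P2) \<or> (\<not> P1 \<and> P2) \<or> (\<not> P1 \<and> \<not> P2 \<and> P3))
    \<and> (\<exists>!\<alpha>::real. \<alpha> > 0 \<and> \<alpha>^4 - \<alpha>^3 - \<alpha>^2 - 1 = 0)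
    \<and> (\<forall>\<alpha>::real. \<alpha> > 0 \<and> \<alpha>^4 - \<alpha>^3 - \<alpha>^2 - 1 = 0 \<longrightarrow>
          \<bar>\<alpha> - 1.755\<bar> < 0.001
        \<and> (\<lambda>n. real (card (R_words (n - 1)))) \<in> \<Theta>(\<lambda>n. \<alpha> ^ n))"
proof -
  interpret digraph V E
    by unfold_locales (fact assms(1))
  have P1: "P1 \<longleftrightarrow> associative_on (ga_carrier V) (ga_op E)"
    unfolding P1_def s_def by (rule spectrum_all_1_iff)
  have P2: "P2 \<longleftrightarrow> bipartite_case"
    unfolding P2_def s_def by (rule spectrum_all_2_iff)
  have P3: "\<not> associative_on (ga_carrier V) (ga_op E) \<Longrightarrow> \<not> bipartite_case \<Longrightarrow> P3"
    unfolding P3_def s_def using card_R_words_le_spectrum by blast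
  show ?thesis
    using P1 P2 P3 not_associative_if_bipartite_case quartic_root_unique quartic_root_growth
    unfolding bipartite_case_def induced_assoc_def induced_bipartite_def by blast
qed

end
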